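(* Let $P_0=(|P_0|,\preccurlyeq_0)$ be a finite poset with $|P_0|=\{x_1,\dots,x_{m_0}\}$ and let $S\subseteq|P_0|$. Fix nonnegative integer values of $m_i$ for all $i$ with $x_i\notin S$, and consider $L_+(P_0;m_1,\dots,m_{m_0})$ as a function of the remaining variables $(m_i)_{x_i\in S}$ ranging over nonnegative integers. If $S$ is a chain in $P_0$, then (for every choice of the fixed values) this function is given by a polynomial with rational coefficients in the variables $(m_i)_{x_i\in S}$; if $S$ is not a chain, then (for every choice of the fixed values) it is not given by any such polynomial.
   Context: For nonnegative integers $m_1,\dots,m_{m_0}$ let $C_1,\dots,C_{m_0}$ be pairwise disjoint chains, $C_i$ being $x_{i,1}<\dots<x_{i,m_i}$. The lexicographic sum $P=P_0*(C_1,\dots,C_{m_0})$ is the poset on $\bigcup_i|C_i|$ with $x_{i,j}\preccurlyeq x_{i',j'}$ iff either $i\ne i'$ and $x_i\preccurlyeq_0x_{i'}$, or $i=i'$ and $j\le j'$. $L_+(P_0;m_1,\dots,m_{m_0})$ is the number of linearizations (total orders refining $\preccurlyeq$) of $P$. *)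

theory Defs
  imports Complex_Main "HOL-Library.FuncSet"
begin

(* The base poset P_0 has ground set {..<n} (element i plays the role of x_{i+1}),
   with order relation R0 (a set of pairs, reflexive on the ground set). *)

(* ground set of the lexicographic sum P_0 * (C_1,...,C_n): element (i,j) is x_{i,j},
   the j-th element of the chain C_i of length m i *)
definition lexsum_carrier :: "nat \<Rightarrow> (nat \<Rightarrow> nat) \<Rightarrow> (nat \<times> nat) set" where
  "lexsum_carrier n m = Sigma {..<n} (\<lambda>i. {..<m i})"

definition lexsum_rel :: "nat \<Rightarrow> (nat \<times> nat) set \<Rightarrow> (nat \<Rightarrow> nat) \<Rightarrow> ((nat \<times> nat) \<times> (nat \<times> nat)) set" where
  "lexsum_rel n R0 m = {(a, b). a \<in> lexsum_carrier n m \<and> b \<in> lexsum_carrier n m \<and>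
      ((fst a \<noteq> fst b \<and> (fst a, fst b) \<in> R0) \<or> (fst a = fst b \<and> snd a \<le> snd b))}"

definition Lplus :: "nat \<Rightarrow> (nat \<times> nat) set \<Rightarrow> (nat \<Rightarrow> nat) \<Rightarrow> nat" where
  "Lplus n R0 m = card {R. linear_order_on (lexsum_carrier n m) R \<and> lexsum_rel n R0 m \<subseteq> R}"

definition is_chain_in :: "(nat \<times> nat) set \<Rightarrow> nat set \<Rightarrow> bool" where
  "is_chain_in R0 S \<longleftrightarrow> (\<forall>x\<in>S. \<forall>y\<in>S. (x, y) \<in> R0 \<or> (y, x) \<in> R0)"

definition is_rat_poly_in :: "nat set \<Rightarrow> ((nat \<Rightarrow> nat) \<Rightarrow> nat) \<Rightarrow> bool" where
  "is_rat_poly_in S F \<longleftrightarrow> (\<exists>(d::nat) (c :: (nat \<Rightarrow> nat) \<Rightarrow> rat). \<forall>v :: nat \<Rightarrow> nat.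
      of_nat (F v) = (\<Sum>e \<in> PiE S (\<lambda>_. {..d}). c e * (\<Prod>i\<in>S. of_nat (v i) ^ e i)))"

end

theory Submission
  imports Defs "HOL-Real_Asymp.Real_Asymp"
begin

(* Removing the last element of a linearization gives the recurrence
   L(m) = sum of L(m - e_i) over the blocks i whose top element (i, m_i - 1) is maximal
   in the lexicographic sum.
   If S is a chain with top s, either a nonempty fixed block above s keeps every block of S
   away from the top, or the recurrence reads L(v) = L(v - e_s) + H(v) with H polynomial by
   induction (on |S| and on the fixed sizes); summing it over v_s stays polynomial by
   Faulhaber's formula.
   If x, y in S are incomparable, both are top blocks whenever nothing else is, so the
   recurrence gives L >= 2^min(m_x, m_y), which no polynomial can match along m_x = m_y = k. *)

section \<open>Linear extensions of finite partial orders\<close>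

definition linear_extensions :: "'a set \<Rightarrow> 'a rel \<Rightarrow> 'a rel set" where
  "linear_extensions C Q = {R. linear_order_on C R \<and> Q \<subseteq> R}"

definition maximals :: "'a set \<Rightarrow> 'a rel \<Rightarrow> 'a set" where
  "maximals C Q = {z\<in>C. \<forall>a\<in>C. (z, a) \<in> Q \<longrightarrow> a = z}"

lemma finite_linear_extensions:
  assumes "finite C"
  shows "finite (linear_extensions C Q)"
proof -
  have "linear_extensions C Q \<subseteq> Pow (C \<times> C)"
    by (auto simp: linear_extensions_def linear_order_on_def partial_order_on_def preorder_on_def)
  then show ?thesis
    using assms by (meson finite_Pow_iff finite_SigmaI finite_subset)
qed

lemma maximals_above:
  assumes fin: "finite C" and po: "partial_order_on C Q" and a: "a \<in> C"
  obtains z where "z \<in> maximals C Q" "(a, z) \<in> Q"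
proof -
  have QC: "Q \<subseteq> C \<times> C" and refl: "(a, a) \<in> Q" and tr: "trans Q"
    using po a by (auto simp: partial_order_on_def preorder_on_def refl_on_def)
  have "finite (Q - Id)"
    using QC fin by (meson finite_Diff finite_SigmaI finite_subset)
  then have "wf ((Q - Id)\<inverse>)"
    using partial_order_on_acyclic[OF po] by (rule finite_acyclic_wf_converse)
  then obtain z where z: "(a, z) \<in> Q" and top: "\<And>y. (z, y) \<in> Q - Id \<Longrightarrow> (a, y) \<notin> Q"
    using wfE_min[of "(Q - Id)\<inverse>" a "{y. (a, y) \<in> Q}"] refl by auto
  have "z \<in> maximals C Q"
    using z top QC tr unfolding maximals_def by (auto dest: transD)
  then show thesis
    using z by (rule that)
qed

lemma linear_order_on_has_top:
  assumes "finite C" "C \<noteq> {}" "linear_order_on C R"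
  obtains z where "z \<in> C" "\<And>a. a \<in> C \<Longrightarrow> (a, z) \<in> R"
proof -
  obtain a where "a \<in> C"
    using assms(2) by blast
  then obtain z where z: "z \<in> maximals C R"
    using assms(1,3) maximals_above unfolding linear_order_on_def by metis
  have "(a, z) \<in> R" if "a \<in> C" for a
  proof -
    have "refl_on C R" "total_on C R"
      using assms(3) by (auto simp: order_on_defs)
    moreover have "z \<in> C" "\<And>b. b \<in> C \<Longrightarrow> (z, b) \<in> R \<Longrightarrow> b = z"
      using z by (auto simp: maximals_def)
    ultimately show ?thesis
      using that unfolding refl_on_def total_on_def by metis
  qed
  with z show thesis
    by (intro that) (auto simp: maximals_def)
qed

lemma linear_order_on_Restr:
  assumes "linear_order_on C R" "C' \<subseteq> C"
  shows "linear_order_on C' (R \<inter> C' \<times> C')"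
  using assms unfolding linear_order_on_def partial_order_on_def preorder_on_def refl_on_def
    total_on_def trans_def antisym_def
  by blast

lemma partial_order_on_Restr:
  assumes "partial_order_on C R" "C' \<subseteq> C"
  shows "partial_order_on C' (R \<inter> C' \<times> C')"
  using assms unfolding partial_order_on_def preorder_on_def refl_on_def trans_def antisym_def
  by blast

lemma linear_order_on_add_top:
  assumes "linear_order_on C R" "z \<notin> C"
  shows "linear_order_on (insert z C) (R \<union> insert z C \<times> {z})"
  using assms unfolding linear_order_on_def partial_order_on_def preorder_on_def refl_on_def
    total_on_def trans_def antisym_def
  by blast

lemma bij_betw_linear_extensions_remove_top:
  assumes z: "z \<in> maximals C Q" and QC: "Q \<subseteq> C \<times> C"
  defines "C' \<equiv> C - {z}"
  shows "bij_betw (\<lambda>R. R \<inter> C' \<times> C')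
           {R \<in> linear_extensions C Q. \<forall>a\<in>C. (a, z) \<in> R} (linear_extensions C' (Q \<inter> C' \<times> C'))"
proof (rule bij_betw_byWitness[where f' = "\<lambda>R'. R' \<union> C \<times> {z}"])
  have C: "C = insert z C'" "z \<notin> C'"
    using z by (auto simp: maximals_def C'_def)
  show "\<forall>R\<in>{R \<in> linear_extensions C Q. \<forall>a\<in>C. (a, z) \<in> R}. R \<inter> C' \<times> C' \<union> C \<times> {z} = R"
  proof
    fix R
    assume "R \<in> {R \<in> linear_extensions C Q. \<forall>a\<in>C. (a, z) \<in> R}"
    then have "R \<subseteq> C \<times> C" "antisym R" "\<forall>a\<in>C. (a, z) \<in> R"
      by (auto simp: linear_extensions_def order_on_defs refl_on_def)
    then show "R \<inter> C' \<times> C' \<union> C \<times> {z} = R"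
      using C unfolding antisym_def by blast
  qed
  show "\<forall>R'\<in>linear_extensions C' (Q \<inter> C' \<times> C'). (R' \<union> C \<times> {z}) \<inter> C' \<times> C' = R'"
    using C by (auto simp: linear_extensions_def order_on_defs refl_on_def)
  show "(\<lambda>R. R \<inter> C' \<times> C') ` {R \<in> linear_extensions C Q. \<forall>a\<in>C. (a, z) \<in> R}
          \<subseteq> linear_extensions C' (Q \<inter> C' \<times> C')"
    using linear_order_on_Restr by (fastforce simp: linear_extensions_def C'_def)
  show "(\<lambda>R'. R' \<union> C \<times> {z}) ` linear_extensions C' (Q \<inter> C' \<times> C')
          \<subseteq> {R \<in> linear_extensions C Q. \<forall>a\<in>C. (a, z) \<in> R}"
  proof (rule image_subsetI)
    fix R'
    assume "R' \<in> linear_extensions C' (Q \<inter> C' \<times> C')"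
    then have "linear_order_on C (R' \<union> C \<times> {z})" "Q \<inter> C' \<times> C' \<subseteq> R'"
      using linear_order_on_add_top[of C' R' z] C by (auto simp: linear_extensions_def)
    moreover have "Q \<subseteq> Q \<inter> C' \<times> C' \<union> C \<times> {z}"
      using z QC by (auto simp: maximals_def C'_def)
    ultimately show "R' \<union> C \<times> {z} \<in> {R \<in> linear_extensions C Q. \<forall>a\<in>C. (a, z) \<in> R}"
      by (auto simp: linear_extensions_def)
  qed
qed

lemma card_linear_extensions_remove_top:
  assumes fin: "finite C" and ne: "C \<noteq> {}" and QC: "Q \<subseteq> C \<times> C"
  shows "card (linear_extensions C Q)
           = (\<Sum>z\<in>maximals C Q. card (linear_extensions (C - {z}) (Q \<inter> (C - {z}) \<times> (C - {z}))))"
proof -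
  define E where "E z = {R \<in> linear_extensions C Q. \<forall>a\<in>C. (a, z) \<in> R}" for z
  have "linear_extensions C Q = (\<Union>z\<in>maximals C Q. E z)"
  proof (intro equalityI subsetI)
    fix R
    assume R: "R \<in> linear_extensions C Q"
    then obtain z where z: "z \<in> C" "\<And>a. a \<in> C \<Longrightarrow> (a, z) \<in> R"
      using linear_order_on_has_top[OF fin ne] by (auto simp: linear_extensions_def)
    have "antisym R" "Q \<subseteq> R"
      using R by (auto simp: linear_extensions_def order_on_defs)
    then have "z \<in> maximals C Q"
      using z unfolding maximals_def antisym_def by blast
    with z R show "R \<in> (\<Union>z\<in>maximals C Q. E z)"
      by (auto simp: E_def)
  qed (auto simp: E_def)
  moreover have "E z \<inter> E z' = {}" if "z \<in> maximals C Q" "z' \<in> maximals C Q" "z \<noteq> z'" for z z'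
    using that by (auto simp: E_def linear_extensions_def order_on_defs maximals_def dest: antisymD)
  moreover have "finite (E z)" for z
    using finite_linear_extensions[OF fin] by (auto simp: E_def)
  ultimately have "card (linear_extensions C Q) = (\<Sum>z\<in>maximals C Q. card (E z))"
    using fin by (simp add: card_UN_disjoint maximals_def)
  also have "\<dots> = (\<Sum>z\<in>maximals C Q. card (linear_extensions (C - {z}) (Q \<inter> (C - {z}) \<times> (C - {z}))))"
    using bij_betw_linear_extensions_remove_top[OF _ QC] bij_betw_same_card
    by (auto simp: E_def intro!: sum.cong)
  finally show ?thesis .
qed

section \<open>The top-removal recurrence for lexicographic sums of chains\<close>

lemma sum_decrement_less:
  fixes f :: "'a \<Rightarrow> nat"
  assumes "finite A" "i \<in> A" "0 < f i"
  shows "sum (f(i := f i - 1)) A < sum f A"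
  using assms by (intro sum_strict_mono_ex1) auto

definition top_blocks :: "nat \<Rightarrow> (nat \<times> nat) set \<Rightarrow> (nat \<Rightarrow> nat) \<Rightarrow> nat set" where
  "top_blocks n R0 m = maximals {i. i < n \<and> 0 < m i} R0"

lemma top_blocks_iff:
  "i \<in> top_blocks n R0 m \<longleftrightarrow> i < n \<and> 0 < m i \<and> (\<forall>j<n. j \<noteq> i \<and> (i, j) \<in> R0 \<longrightarrow> m j = 0)"
  by (auto simp: top_blocks_def maximals_def)

lemma finite_top_blocks: "finite (top_blocks n R0 m)"
  by (auto simp: top_blocks_def maximals_def)

lemma top_block_above:
  assumes po: "partial_order_on {..<n} R0" and j: "j < n" "0 < m j"
  obtains i where "i \<in> top_blocks n R0 m" "(j, i) \<in> R0"
proof -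
  define D where "D = {i. i < n \<and> 0 < m i}"
  have "finite D"
    by (auto simp: D_def)
  moreover have "partial_order_on D (R0 \<inter> D \<times> D)"
    by (rule partial_order_on_Restr[OF po]) (auto simp: D_def)
  moreover have "j \<in> D"
    using j by (auto simp: D_def)
  ultimately obtain i where "i \<in> maximals D (R0 \<inter> D \<times> D)" "(j, i) \<in> R0 \<inter> D \<times> D"
    by (rule maximals_above)
  then show thesis
    by (intro that) (auto simp: top_blocks_def maximals_def D_def)
qed

lemma lexsum_carrier_remove_top:
  assumes "i < n" "0 < m i"
  shows "lexsum_carrier n m - {(i, m i - 1)} = lexsum_carrier n (m(i := m i - 1))"
  using assms by (auto simp: lexsum_carrier_def split: if_splits)

lemma lexsum_rel_remove_top:
  assumes "i < n" "0 < m i"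
  shows "lexsum_rel n R0 m \<inter> (lexsum_carrier n m - {(i, m i - 1)}) \<times> (lexsum_carrier n m - {(i, m i - 1)})
           = lexsum_rel n R0 (m(i := m i - 1))"
  unfolding lexsum_carrier_remove_top[where n = n and m = m, OF assms] using assms
  by (auto simp: lexsum_rel_def lexsum_carrier_def split: if_splits)

lemma maximals_lexsum:
  "maximals (lexsum_carrier n m) (lexsum_rel n R0 m) = (\<lambda>i. (i, m i - 1)) ` top_blocks n R0 m"
proof (intro equalityI subsetI)
  fix z
  assume z: "z \<in> maximals (lexsum_carrier n m) (lexsum_rel n R0 m)"
  obtain i j where ij: "z = (i, j)" "i < n" "j < m i"
    using z by (auto simp: maximals_def lexsum_carrier_def)
  have top: "\<And>b. b \<in> lexsum_carrier n m \<Longrightarrow> (z, b) \<in> lexsum_rel n R0 m \<Longrightarrow> b = z"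
    using z by (auto simp: maximals_def)
  have "j = m i - 1"
    using top[of "(i, Suc j)"] ij by (fastforce simp: lexsum_carrier_def lexsum_rel_def)
  moreover have "i \<in> top_blocks n R0 m"
    using top ij by (fastforce simp: top_blocks_iff lexsum_carrier_def lexsum_rel_def)
  ultimately show "z \<in> (\<lambda>i. (i, m i - 1)) ` top_blocks n R0 m"
    using ij by auto
qed (auto simp: top_blocks_iff maximals_def lexsum_carrier_def lexsum_rel_def)

lemma Lplus_remove_top:
  assumes "lexsum_carrier n m \<noteq> {}"
  shows "Lplus n R0 m = (\<Sum>i\<in>top_blocks n R0 m. Lplus n R0 (m(i := m i - 1)))"
proof -
  let ?C = "lexsum_carrier n m" and ?Q = "lexsum_rel n R0 m"
  have fin: "finite ?C"
    by (auto simp: lexsum_carrier_def)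
  have QC: "?Q \<subseteq> ?C \<times> ?C"
    by (auto simp: lexsum_rel_def)
  have "Lplus n R0 m
      = (\<Sum>z\<in>maximals ?C ?Q. card (linear_extensions (?C - {z}) (?Q \<inter> (?C - {z}) \<times> (?C - {z}))))"
    unfolding Lplus_def linear_extensions_def[symmetric]
    by (rule card_linear_extensions_remove_top[OF fin assms QC])
  also have "\<dots> = (\<Sum>i\<in>top_blocks n R0 m. card (linear_extensions (?C - {(i, m i - 1)})
                      (?Q \<inter> (?C - {(i, m i - 1)}) \<times> (?C - {(i, m i - 1)}))))"
    unfolding maximals_lexsum by (rule sum.reindex_cong[OF _ refl refl]) (auto simp: inj_on_def)
  also have "\<dots> = (\<Sum>i\<in>top_blocks n R0 m. Lplus n R0 (m(i := m i - 1)))"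
  proof (rule sum.cong[OF refl])
    fix i
    assume "i \<in> top_blocks n R0 m"
    then have "i < n" "0 < m i"
      by (auto simp: top_blocks_iff)
    then show "card (linear_extensions (?C - {(i, m i - 1)}) (?Q \<inter> (?C - {(i, m i - 1)}) \<times> (?C - {(i, m i - 1)})))
        = Lplus n R0 (m(i := m i - 1))"
      using lexsum_rel_remove_top[where n = n and m = m, OF \<open>i < n\<close> \<open>0 < m i\<close>]
        lexsum_carrier_remove_top[where n = n and m = m, OF \<open>i < n\<close> \<open>0 < m i\<close>]
      by (simp add: Lplus_def linear_extensions_def)
  qed
  finally show ?thesis .
qed

lemma Lplus_remove_top_le:
  assumes "i \<in> top_blocks n R0 m"
  shows "Lplus n R0 (m(i := m i - 1)) \<le> Lplus n R0 m"
proof -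
  have "lexsum_carrier n m \<noteq> {}"
    using assms by (auto simp: top_blocks_iff lexsum_carrier_def)
  have "Lplus n R0 (m(i := m i - 1)) \<le> (\<Sum>i\<in>top_blocks n R0 m. Lplus n R0 (m(i := m i - 1)))"
    by (rule member_le_sum[OF assms _ finite_top_blocks]) simp
  also have "\<dots> = Lplus n R0 m"
    using \<open>lexsum_carrier n m \<noteq> {}\<close> by (rule Lplus_remove_top[symmetric])
  finally show ?thesis .
qed

lemma sum_remove_top_less:
  assumes "i \<in> top_blocks n R0 m"
  shows "sum (m(i := m i - 1)) {..<n} < sum m {..<n}"
  using assms by (intro sum_decrement_less) (auto simp: top_blocks_iff)

lemma Lplus_pos:
  assumes po: "partial_order_on {..<n} R0"
  shows "0 < Lplus n R0 m"
proof (induction "sum m {..<n}" arbitrary: m rule: less_induct)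
  case less
  show ?case
  proof (cases "lexsum_carrier n m = {}")
    case True
    then have "{R. linear_order_on (lexsum_carrier n m) R \<and> lexsum_rel n R0 m \<subseteq> R} = {{}}"
      by (auto simp: lexsum_rel_def order_on_defs refl_on_def)
    then show ?thesis
      by (simp add: Lplus_def)
  next
    case False
    then obtain j k where "j < n" "k < m j"
      by (auto simp: lexsum_carrier_def)
    then obtain i where i: "i \<in> top_blocks n R0 m"
      using top_block_above[where m = m, OF po \<open>j < n\<close>] by auto
    have "0 < Lplus n R0 (m(i := m i - 1))"
      using i by (intro less.hyps sum_remove_top_less)
    also have "\<dots> \<le> Lplus n R0 m"
      using i by (rule Lplus_remove_top_le)
    finally show ?thesis .
  qed
qed

lemma two_power_min_le:
  fixes a b :: nat
  assumes "0 < a" "0 < b"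
  shows "(2::nat) ^ min a b \<le> 2 ^ min (a - 1) b + 2 ^ min a (b - 1)"
proof -
  define k where "k = min (a - 1) (b - 1)"
  have "min a b = Suc k"
    using assms by (simp add: k_def)
  then have "(2::nat) ^ min a b = 2 ^ k + 2 ^ k"
    by simp
  also have "\<dots> \<le> 2 ^ min (a - 1) b + 2 ^ min a (b - 1)"
    by (intro add_mono power_increasing) (auto simp: k_def)
  finally show ?thesis .
qed

lemma top_block_in_pair:
  assumes po: "partial_order_on {..<n} R0" and x: "x < n" "0 < m x" "(x, y) \<notin> R0"
    and tops: "top_blocks n R0 m \<subseteq> {x, y}"
  shows "x \<in> top_blocks n R0 m"
proof -
  obtain i where "i \<in> top_blocks n R0 m" "(x, i) \<in> R0"
    using top_block_above[where m = m, OF po x(1,2)] by blast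
  moreover have "i \<noteq> y"
    using calculation(2) x(3) by blast
  ultimately show ?thesis
    using tops by blast
qed

lemma Lplus_incomparable_lower_bound:
  assumes po: "partial_order_on {..<n} R0"
    and xy: "x < n" "y < n" "(x, y) \<notin> R0" "(y, x) \<notin> R0"
  shows "2 ^ min (m x) (m y) \<le> Lplus n R0 m"
proof (induction "sum m {..<n}" arbitrary: m rule: less_induct)
  case less
  have IH: "2 ^ min ((m(i := m i - 1)) x) ((m(i := m i - 1)) y) \<le> Lplus n R0 (m(i := m i - 1))"
    if "i \<in> top_blocks n R0 m" for i
    using that by (intro less.hyps sum_remove_top_less)
  consider "m x = 0 \<or> m y = 0" | i where "i \<in> top_blocks n R0 m" "i \<noteq> x" "i \<noteq> y"
    | "0 < m x" "0 < m y" "top_blocks n R0 m \<subseteq> {x, y}"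
    by blast
  then show ?case
  proof cases
    case 1
    then show ?thesis
      using Lplus_pos[OF po, of m] by auto
  next
    case (2 i)
    then have "2 ^ min (m x) (m y) \<le> Lplus n R0 (m(i := m i - 1))"
      using IH[of i] by simp
    also have "\<dots> \<le> Lplus n R0 m"
      using 2 by (intro Lplus_remove_top_le)
    finally show ?thesis .
  next
    case 3
    have tops: "x \<in> top_blocks n R0 m" "y \<in> top_blocks n R0 m"
      using top_block_in_pair[where m = m, OF po xy(1) 3(1) xy(3) 3(3)]
        top_block_in_pair[where m = m, OF po xy(2) 3(2) xy(4)] 3(3) by (auto simp: insert_commute)
    have "x \<noteq> y"
      using xy po by (auto simp: order_on_defs refl_on_def)
    then have "2 ^ min (m x - 1) (m y) + 2 ^ min (m x) (m y - 1)
        \<le> Lplus n R0 (m(x := m x - 1)) + Lplus n R0 (m(y := m y - 1))"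
      using IH[OF tops(1)] IH[OF tops(2)] by simp
    also have "\<dots> = (\<Sum>i\<in>{x, y}. Lplus n R0 (m(i := m i - 1)))"
      using \<open>x \<noteq> y\<close> by simp
    also have "\<dots> \<le> (\<Sum>i\<in>top_blocks n R0 m. Lplus n R0 (m(i := m i - 1)))"
      using tops by (intro sum_mono2 finite_top_blocks) auto
    also have "\<dots> = Lplus n R0 m"
      using tops by (intro Lplus_remove_top[symmetric]) (auto simp: top_blocks_iff lexsum_carrier_def)
    finally show ?thesis
      using two_power_min_le[OF 3(1,2)] by linarith
  qed
qed

section \<open>Rational polynomial functions\<close>

inductive poly_fun :: "nat set \<Rightarrow> ((nat \<Rightarrow> nat) \<Rightarrow> rat) \<Rightarrow> bool" for S where
  poly_fun_const: "poly_fun S (\<lambda>v. c)"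
| poly_fun_add: "poly_fun S f \<Longrightarrow> poly_fun S g \<Longrightarrow> poly_fun S (\<lambda>v. f v + g v)"
| poly_fun_mult_var: "i \<in> S \<Longrightarrow> poly_fun S f \<Longrightarrow> poly_fun S (\<lambda>v. of_nat (v i) * f v)"

lemma poly_fun_mono: "poly_fun S f \<Longrightarrow> S \<subseteq> T \<Longrightarrow> poly_fun T f"
  by (induction rule: poly_fun.induct) (auto intro: poly_fun.intros)

lemma poly_fun_cmult: "poly_fun S f \<Longrightarrow> poly_fun S (\<lambda>v. c * f v)"
proof (induction rule: poly_fun.induct)
  case (poly_fun_const c')
  show ?case
    by (rule poly_fun.poly_fun_const)
next
  case (poly_fun_add f g)
  show ?case
    using poly_fun.poly_fun_add[OF poly_fun_add.IH] by (simp add: distrib_left)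
next
  case (poly_fun_mult_var i f)
  show ?case
    using poly_fun.poly_fun_mult_var[OF poly_fun_mult_var.hyps(1) poly_fun_mult_var.IH]
    by (simp add: mult.left_commute)
qed

lemma poly_fun_diff: "poly_fun S f \<Longrightarrow> poly_fun S g \<Longrightarrow> poly_fun S (\<lambda>v. f v - g v)"
  using poly_fun_add[of S f "\<lambda>v. - 1 * g v"] poly_fun_cmult[of S g "- 1"] by simp

lemma poly_fun_sum:
  "finite I \<Longrightarrow> (\<And>i. i \<in> I \<Longrightarrow> poly_fun S (f i)) \<Longrightarrow> poly_fun S (\<lambda>v. \<Sum>i\<in>I. f i v)"
  by (induction I rule: finite_induct) (auto intro: poly_fun.intros)

lemma poly_fun_power_var: "i \<in> S \<Longrightarrow> poly_fun S (\<lambda>v. of_nat (v i) ^ k)"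
  by (induction k) (auto intro: poly_fun.intros)

lemma poly_fun_shift: "poly_fun S f \<Longrightarrow> poly_fun S (\<lambda>v. f (v(s := Suc (v s))))"
proof (induction rule: poly_fun.induct)
  case (poly_fun_const c)
  show ?case
    by (rule poly_fun.poly_fun_const)
next
  case (poly_fun_add f g)
  show ?case
    by (rule poly_fun.poly_fun_add[OF poly_fun_add.IH])
next
  case (poly_fun_mult_var i f)
  show ?case
  proof (cases "i = s")
    case True
    then show ?thesis
      using poly_fun.poly_fun_add[OF poly_fun.poly_fun_mult_var[OF poly_fun_mult_var.hyps(1) poly_fun_mult_var.IH]
          poly_fun_mult_var.IH]
      by (simp add: algebra_simps)
  next
    case False
    then show ?thesis
      using poly_fun.poly_fun_mult_var[OF poly_fun_mult_var.hyps(1) poly_fun_mult_var.IH] by simp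
  qed
qed

lemma of_nat_power_Suc_eq_sum:
  "(of_nat X :: rat) ^ Suc a = (\<Sum>j<X. \<Sum>b\<le>a. of_nat (Suc a choose b) * of_nat j ^ b)"
proof (induction X)
  case 0
  then show ?case by simp
next
  case (Suc X)
  have "(of_nat (Suc X) :: rat) ^ Suc a = (of_nat X + 1) ^ Suc a"
    by (simp add: add.commute)
  also have "\<dots> = (\<Sum>b\<le>Suc a. of_nat (Suc a choose b) * of_nat X ^ b * 1 ^ (Suc a - b))"
    by (rule binomial_ring)
  also have "\<dots> = of_nat X ^ Suc a + (\<Sum>b\<le>a. of_nat (Suc a choose b) * of_nat X ^ b)"
    by (simp add: sum.atMost_Suc)
  finally show ?case
    using Suc.IH by simp
qed

lemma sum_powers_rec:
  "(of_nat (Suc a) :: rat) * (\<Sum>j<X. of_nat j ^ a)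
     = of_nat X ^ Suc a - (\<Sum>b<a. of_nat (Suc a choose b) * (\<Sum>j<X. of_nat j ^ b))"
proof -
  have "(of_nat X :: rat) ^ Suc a = (\<Sum>b\<le>a. of_nat (Suc a choose b) * (\<Sum>j<X. of_nat j ^ b))"
    unfolding of_nat_power_Suc_eq_sum by (subst sum.swap) (simp add: sum_distrib_left)
  also have "\<dots> = (\<Sum>b<a. of_nat (Suc a choose b) * (\<Sum>j<X. of_nat j ^ b))
                  + of_nat (Suc a) * (\<Sum>j<X. of_nat j ^ a)"
    by (simp add: lessThan_Suc_atMost[symmetric])
  finally show ?thesis
    by simp
qed

lemma poly_fun_sum_powers: "s \<in> S \<Longrightarrow> poly_fun S (\<lambda>v. \<Sum>j<v s. of_nat j ^ a)"
proof (induction a rule: less_induct)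
  case (less a)
  have "poly_fun S (\<lambda>v. 1 / of_nat (Suc a) * (of_nat (v s) ^ Suc a
          - (\<Sum>b<a. of_nat (Suc a choose b) * (\<Sum>j<v s. of_nat j ^ b))))"
    by (intro poly_fun_cmult poly_fun_diff poly_fun_power_var poly_fun_sum less less.IH) auto
  moreover have "1 / of_nat (Suc a) * (of_nat (v s) ^ Suc a
          - (\<Sum>b<a. of_nat (Suc a choose b) * (\<Sum>j<v s. of_nat j ^ b)))
        = (\<Sum>j<v s. of_nat j ^ a :: rat)" for v
    unfolding sum_powers_rec[symmetric] by (simp del: of_nat_Suc)
  ultimately show ?case
    by simp
qed

(* The weight j ^ a lets the induction absorb a factor v s of the summand into the exponent. *)
lemma poly_fun_sum_below_weighted:
  "poly_fun S g \<Longrightarrow> s \<in> S \<Longrightarrow> poly_fun S (\<lambda>v. \<Sum>j<v s. of_nat j ^ a * g (v(s := j)))"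
proof (induction arbitrary: a rule: poly_fun.induct)
  case (poly_fun_const c)
  then show ?case
    using poly_fun_cmult[OF poly_fun_sum_powers, of s S c a]
    by (simp add: sum_distrib_left mult.commute)
next
  case (poly_fun_add f g)
  then show ?case
    using poly_fun.poly_fun_add[OF poly_fun_add.IH] by (simp add: algebra_simps sum.distrib)
next
  case (poly_fun_mult_var i f)
  show ?case
  proof (cases "i = s")
    case True
    then show ?thesis
      using poly_fun_mult_var.IH[OF poly_fun_mult_var.prems, of "Suc a"] by (simp add: algebra_simps)
  next
    case False
    then show ?thesis
      using poly_fun.poly_fun_mult_var[OF poly_fun_mult_var.hyps(1) poly_fun_mult_var.IH[OF poly_fun_mult_var.prems, of a]]
      by (simp add: algebra_simps sum_distrib_left)
  qed
qed

lemma poly_fun_sum_below: "poly_fun S g \<Longrightarrow> s \<in> S \<Longrightarrow> poly_fun S (\<lambda>v. \<Sum>j<v s. g (v(s := j)))"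
  using poly_fun_sum_below_weighted[of S g s 0] by simp

lemma poly_fun_telescope:
  assumes "s \<in> S" and "poly_fun S H" and "poly_fun S (\<lambda>v. G (v(s := 0)))"
    and step: "\<And>v. 0 < v s \<Longrightarrow> G v = G (v(s := v s - 1)) + H v"
  shows "poly_fun S G"
proof -
  have unroll: "G v = G (v(s := 0)) + (\<Sum>j<v s. H (v(s := Suc j)))" for v
  proof (induction "v s" arbitrary: v)
    case 0
    then show ?case
      by (metis fun_upd_triv lessThan_0 sum.empty add_0_right)
  next
    case (Suc k)
    have "G v = G (v(s := k)) + H v"
      using step[of v] Suc.hyps(2)[symmetric] by simp
    also have "G (v(s := k)) = G (v(s := 0)) + (\<Sum>j<k. H (v(s := Suc j)))"
      using Suc.hyps(1)[of "v(s := k)"] by (simp only: fun_upd_upd fun_upd_same)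
    also have "H v = H (v(s := Suc k))"
      using Suc.hyps(2) by (metis fun_upd_triv)
    finally show ?case
      using Suc.hyps(2)[symmetric] by (simp only: sum.lessThan_Suc add.assoc)
  qed
  have "poly_fun S (\<lambda>v. G (v(s := 0)) + (\<Sum>j<v s. H (v(s := Suc j))))"
    using poly_fun_sum_below[OF poly_fun_shift[OF assms(2), of s] assms(1)] assms(3)
    by (auto intro: poly_fun.poly_fun_add)
  also have "(\<lambda>v. G (v(s := 0)) + (\<Sum>j<v s. H (v(s := Suc j)))) = G"
    by (intro ext) (rule unroll[symmetric])
  finally show ?thesis .
qed

definition monomial_sum :: "nat set \<Rightarrow> nat \<Rightarrow> ((nat \<Rightarrow> nat) \<Rightarrow> rat) \<Rightarrow> (nat \<Rightarrow> nat) \<Rightarrow> rat" where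
  "monomial_sum S d c v = (\<Sum>e \<in> PiE S (\<lambda>_. {..d}). c e * (\<Prod>i\<in>S. of_nat (v i) ^ e i))"

lemma monomial_sum_const: "monomial_sum S 0 (\<lambda>_. a) = (\<lambda>v. a)"
proof -
  have "PiE S (\<lambda>_. {..0::nat}) = {\<lambda>i\<in>S. 0}"
    by (subst PiE_eq_singleton) auto
  then show ?thesis
    by (simp add: monomial_sum_def fun_eq_iff)
qed

lemma monomial_sum_raise_degree:
  assumes "finite S" "d \<le> d'"
  shows "monomial_sum S d c = monomial_sum S d' (\<lambda>e. if e \<in> PiE S (\<lambda>_. {..d}) then c e else 0)"
proof
  fix v
  have "PiE S (\<lambda>_. {..d}) \<subseteq> PiE S (\<lambda>_. {..d'})"
    using assms(2) by (intro PiE_mono) auto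
  then show "monomial_sum S d c v
      = monomial_sum S d' (\<lambda>e. if e \<in> PiE S (\<lambda>_. {..d}) then c e else 0) v"
    unfolding monomial_sum_def
    by (intro sum.mono_neutral_cong_left) (use assms(1) in \<open>auto intro: finite_PiE\<close>)
qed

lemma monomial_sum_add:
  assumes "finite S"
  shows "\<exists>d c. (\<lambda>v. monomial_sum S d1 c1 v + monomial_sum S d2 c2 v) = monomial_sum S d c"
proof -
  define d where "d = max d1 d2"
  obtain c1' c2' where "monomial_sum S d1 c1 = monomial_sum S d c1'" "monomial_sum S d2 c2 = monomial_sum S d c2'"
    using monomial_sum_raise_degree[OF assms] unfolding d_def by (metis max.cobounded1 max.cobounded2)
  then have "(\<lambda>v. monomial_sum S d1 c1 v + monomial_sum S d2 c2 v) = monomial_sum S d (\<lambda>e. c1' e + c2' e)"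
    by (simp add: monomial_sum_def fun_eq_iff algebra_simps sum.distrib)
  then show ?thesis
    by blast
qed

lemma monomial_sum_mult_var:
  assumes "finite S" "i \<in> S"
  shows "\<exists>d' c'. (\<lambda>v. of_nat (v i) * monomial_sum S d c v) = monomial_sum S d' c'"
proof -
  define A where "A = PiE S (\<lambda>_. {..d})"
  define raise where "raise e = e(i := Suc (e i))" for e :: "nat \<Rightarrow> nat"
  define c' where "c' e = (if e \<in> raise ` A then c (e(i := e i - 1)) else 0)" for e
  have inj: "inj_on raise A"
    unfolding inj_on_def raise_def by (metis diff_Suc_1 fun_upd_triv fun_upd_upd fun_upd_same)
  have raise_A: "raise ` A \<subseteq> PiE S (\<lambda>_. {..Suc d})"
    using assms(2) by (auto simp: A_def raise_def PiE_def Pi_def extensional_def)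
  have monomial_raise: "(of_nat (v i) :: rat) * (\<Prod>j\<in>S. of_nat (v j) ^ e j)
      = (\<Prod>j\<in>S. of_nat (v j) ^ raise e j)" for v e
  proof -
    have "(\<Prod>j\<in>S - {i}. (of_nat (v j) :: rat) ^ raise e j) = (\<Prod>j\<in>S - {i}. of_nat (v j) ^ e j)"
      by (rule prod.cong) (auto simp: raise_def)
    then show ?thesis
      using assms by (simp add: prod.remove raise_def)
  qed
  have "of_nat (v i) * monomial_sum S d c v = monomial_sum S (Suc d) c' v" for v
  proof -
    have "of_nat (v i) * monomial_sum S d c v = (\<Sum>e\<in>A. c e * (\<Prod>j\<in>S. of_nat (v j) ^ raise e j))"
      by (simp add: monomial_sum_def A_def sum_distrib_left monomial_raise[symmetric] algebra_simps)
    also have "\<dots> = (\<Sum>e\<in>raise ` A. c' e * (\<Prod>j\<in>S. of_nat (v j) ^ e j))"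
      by (subst sum.reindex[OF inj]) (auto simp: c'_def raise_def)
    also have "\<dots> = monomial_sum S (Suc d) c' v"
      unfolding monomial_sum_def using raise_A assms(1)
      by (intro sum.mono_neutral_cong_left) (auto simp: c'_def intro: finite_PiE)
    finally show ?thesis .
  qed
  then show ?thesis
    by blast
qed

lemma poly_fun_monomial_sum:
  "poly_fun S f \<Longrightarrow> finite S \<Longrightarrow> \<exists>d c. f = monomial_sum S d c"
proof (induction rule: poly_fun.induct)
  case (poly_fun_const a)
  show ?case
    using monomial_sum_const[symmetric] by blast
next
  case (poly_fun_add f g)
  then obtain d1 c1 d2 c2 where "f = monomial_sum S d1 c1" "g = monomial_sum S d2 c2"
    by blast
  then show ?case
    using monomial_sum_add[OF poly_fun_add.prems] by simp
next
  case (poly_fun_mult_var i f)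
  then obtain d c where "f = monomial_sum S d c"
    by blast
  then show ?case
    using monomial_sum_mult_var[OF poly_fun_mult_var.prems poly_fun_mult_var.hyps(1)] by simp
qed

lemma is_rat_poly_in_if_poly_fun:
  assumes "finite S" "poly_fun S (\<lambda>v. of_nat (F v))"
  shows "is_rat_poly_in S F"
proof -
  obtain d c where "(\<lambda>v. of_nat (F v)) = monomial_sum S d c"
    using poly_fun_monomial_sum[OF assms(2,1)] by blast
  then show ?thesis
    unfolding is_rat_poly_in_def monomial_sum_def fun_eq_iff by blast
qed

lemma monomial_sum_bound:
  assumes "finite S" and v: "\<And>i. v i \<le> k"
  shows "\<bar>monomial_sum S d c v\<bar> \<le> (\<Sum>e \<in> PiE S (\<lambda>_. {..d}). \<bar>c e\<bar>) * (of_nat k + 1) ^ (d * card S)"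
proof -
  have monomial: "(\<Prod>i\<in>S. (of_nat (v i) :: rat) ^ e i) \<le> (of_nat k + 1) ^ (d * card S)"
    if "e \<in> PiE S (\<lambda>_. {..d})" for e
  proof -
    have "(\<Prod>i\<in>S. (of_nat (v i) :: rat) ^ e i) \<le> (\<Prod>i\<in>S. (of_nat k + 1) ^ d)"
    proof (rule prod_mono)
      fix i
      assume "i \<in> S"
      then have "e i \<le> d"
        using that by (auto simp: PiE_def Pi_def)
      have "(of_nat (v i) :: rat) ^ e i \<le> (of_nat k + 1) ^ e i"
        using v[of i] by (intro power_mono) auto
      also have "\<dots> \<le> (of_nat k + 1) ^ d"
        using \<open>e i \<le> d\<close> by (intro power_increasing) auto
      finally show "0 \<le> (of_nat (v i) :: rat) ^ e i \<and> (of_nat (v i) :: rat) ^ e i \<le> (of_nat k + 1) ^ d"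
        by simp
    qed
    then show ?thesis
      by (simp add: power_mult)
  qed
  have "\<bar>monomial_sum S d c v\<bar> \<le> (\<Sum>e \<in> PiE S (\<lambda>_. {..d}). \<bar>c e\<bar> * (\<Prod>i\<in>S. of_nat (v i) ^ e i))"
    unfolding monomial_sum_def by (rule order_trans[OF sum_abs]) (simp add: abs_mult abs_prod)
  also have "\<dots> \<le> (\<Sum>e \<in> PiE S (\<lambda>_. {..d}). \<bar>c e\<bar> * (of_nat k + 1) ^ (d * card S))"
    using monomial by (intro sum_mono mult_left_mono) auto
  finally show ?thesis
    by (simp add: sum_distrib_right)
qed

lemma not_is_rat_poly_in_if_exponential:
  assumes "finite S" and exp: "\<And>k. \<exists>v. (\<forall>i. v i \<le> k) \<and> 2 ^ k \<le> F v"
  shows "\<not> is_rat_poly_in S F"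
proof
  assume "is_rat_poly_in S F"
  then obtain d c where F: "\<And>v. of_nat (F v) = monomial_sum S d c v"
    unfolding is_rat_poly_in_def monomial_sum_def by blast
  define C where "C = (\<Sum>e \<in> PiE S (\<lambda>_. {..d}). \<bar>c e\<bar>)"
  have "((\<lambda>k::nat. real_of_rat C * (real k + 1) ^ (d * card S) / 2 ^ k) \<longlongrightarrow> 0) at_top"
    by real_asymp
  then obtain k where k: "real_of_rat C * (real k + 1) ^ (d * card S) / 2 ^ k < 1"
    using order_tendstoD(2)[of _ 0 at_top 1] eventually_at_top_linorder by fastforce
  obtain v where v: "\<And>i. v i \<le> k" "2 ^ k \<le> F v"
    using exp by blast
  have "(2::rat) ^ k \<le> of_nat (F v)"
    using v(2) by (metis of_nat_le_iff of_nat_numeral of_nat_power)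
  also have "\<dots> \<le> C * (of_nat k + 1) ^ (d * card S)"
    using monomial_sum_bound[where v = v and k = k and d = d and c = c, OF assms(1) v(1)] by (simp add: F C_def)
  finally have "real_of_rat (2 ^ k) \<le> real_of_rat (C * (of_nat k + 1) ^ (d * card S))"
    by (simp only: of_rat_less_eq)
  then have "(2::real) ^ k \<le> real_of_rat C * (real k + 1) ^ (d * card S)"
    by (simp add: of_rat_mult of_rat_power of_rat_add)
  with k show False
    by (simp add: divide_less_eq)
qed

section \<open>Polynomiality along a chain\<close>

lemma chain_has_greatest:
  assumes po: "partial_order_on {..<n} R0" and S: "S \<subseteq> {..<n}" "S \<noteq> {}"
    and chain: "is_chain_in R0 S"
  obtains s where "s \<in> S" "\<And>t. t \<in> S \<Longrightarrow> (t, s) \<in> R0"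
proof -
  obtain a where "a \<in> S"
    using S(2) by blast
  have "finite S"
    using S(1) finite_subset by blast
  moreover have "partial_order_on S (R0 \<inter> S \<times> S)"
    using po S(1) by (rule partial_order_on_Restr)
  ultimately obtain s where s: "s \<in> maximals S (R0 \<inter> S \<times> S)"
    using \<open>a \<in> S\<close> maximals_above by metis
  have "(t, s) \<in> R0" if "t \<in> S" for t
    using s that chain by (auto simp: maximals_def is_chain_in_def)
  with s show thesis
    by (intro that) (auto simp: maximals_def)
qed

definition fixed_tops :: "nat \<Rightarrow> (nat \<times> nat) set \<Rightarrow> nat set \<Rightarrow> nat \<Rightarrow> (nat \<Rightarrow> nat) \<Rightarrow> nat set" where
  "fixed_tops n R0 S s w = {i \<in> top_blocks n R0 (override_on w (\<lambda>_. 0) S). (i, s) \<notin> R0}"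

lemma fixed_topsD:
  assumes "i \<in> fixed_tops n R0 S s w"
  shows "i < n" "i \<notin> S" "0 < w i"
  using assms by (auto simp: fixed_tops_def top_blocks_iff override_on_def split: if_splits)

lemma finite_fixed_tops: "finite (fixed_tops n R0 S s w)"
  using finite_top_blocks by (simp add: fixed_tops_def)

lemma override_on_decrement_notin:
  "i \<notin> S \<Longrightarrow> (override_on w v S)(i := override_on w v S i - 1) = override_on (w(i := w i - 1)) v S"
  by (auto simp: override_on_def)

lemma override_on_decrement_in:
  "i \<in> S \<Longrightarrow> (override_on w v S)(i := override_on w v S i - 1) = override_on w (v(i := v i - 1)) S"
  by (auto simp: override_on_def)

lemma sum_Lplus_fixed_tops_decrement:
  "(\<Sum>i\<in>fixed_tops n R0 S s w. Lplus n R0 ((override_on w v S)(i := override_on w v S i - 1)))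
     = (\<Sum>i\<in>fixed_tops n R0 S s w. Lplus n R0 (override_on (w(i := w i - 1)) v S))"
proof (rule sum.cong[OF refl])
  fix i
  assume "i \<in> fixed_tops n R0 S s w"
  then show "Lplus n R0 ((override_on w v S)(i := override_on w v S i - 1))
      = Lplus n R0 (override_on (w(i := w i - 1)) v S)"
    by (subst override_on_decrement_notin[OF fixed_topsD(2)]) auto
qed

lemma top_block_override_if_not_below:
  assumes tr: "trans R0" and s: "\<forall>t\<in>S. (t, s) \<in> R0"
    and i: "i \<in> top_blocks n R0 (override_on w (\<lambda>_. 0) S)" "(i, s) \<notin> R0"
  shows "i \<in> top_blocks n R0 (override_on w v S)"
proof -
  have "(i, j) \<notin> R0" if "j \<in> S" for j
    using i(2) s that transD[OF tr] by blast
  then show ?thesis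
    using i(1) by (auto simp: top_blocks_iff override_on_def)
qed

lemma top_block_override_notin:
  assumes "i \<in> top_blocks n R0 (override_on w v S)" "i \<notin> S"
  shows "i \<in> top_blocks n R0 (override_on w (\<lambda>_. 0) S)"
  using assms by (auto simp: top_blocks_iff override_on_def)

lemma top_blocks_override_dominated:
  assumes po: "partial_order_on {..<n} R0" and s: "s \<in> S" "\<forall>t\<in>S. (t, s) \<in> R0"
    and i0: "i0 < n" "i0 \<notin> S" "0 < w i0" "(s, i0) \<in> R0"
  shows "top_blocks n R0 (override_on w v S) = fixed_tops n R0 S s w"
proof -
  have tr: "trans R0" and as: "antisym R0"
    using po by (auto simp: order_on_defs)
  have "i \<notin> S \<and> (i, s) \<notin> R0" if i: "i \<in> top_blocks n R0 (override_on w v S)" for i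
  proof -
    have below_i0: "i = i0" if "(i, s) \<in> R0"
      using i i0 that transD[OF tr that i0(4)] by (auto simp: top_blocks_iff)
    then have "i \<notin> S"
      using s i0(2) by blast
    moreover have "(i, s) \<notin> R0"
      using below_i0 antisymD[OF as _ i0(4)] s(1) i0(2) by blast
    ultimately show ?thesis ..
  qed
  then show ?thesis
    unfolding fixed_tops_def using top_block_override_if_not_below[OF tr s(2)] top_block_override_notin
    by blast
qed

lemma top_blocks_override_top:
  assumes po: "partial_order_on {..<n} R0" and S: "S \<subseteq> {..<n}"
    and s: "s \<in> S" "\<forall>t\<in>S. (t, s) \<in> R0"
    and free: "\<forall>i<n. i \<notin> S \<and> (s, i) \<in> R0 \<longrightarrow> w i = 0" and vs: "0 < v s"
  shows "top_blocks n R0 (override_on w v S) = insert s (fixed_tops n R0 S s w)"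
proof -
  have tr: "trans R0" and as: "antisym R0"
    using po by (auto simp: order_on_defs)
  have "s \<in> top_blocks n R0 (override_on w v S)"
    using s S free vs as by (auto simp: top_blocks_iff dest: antisymD)
  moreover have "i \<notin> S \<and> (i, s) \<notin> R0" if "i \<in> top_blocks n R0 (override_on w v S)" "i \<noteq> s" for i
    using that s S vs by (auto simp: top_blocks_iff)
  ultimately show ?thesis
    unfolding fixed_tops_def using top_block_override_if_not_below[OF tr s(2)] top_block_override_notin
    by blast
qed

lemma Lplus_override_dominated:
  assumes po: "partial_order_on {..<n} R0" and s: "s \<in> S" "\<forall>t\<in>S. (t, s) \<in> R0"
    and i0: "i0 < n" "i0 \<notin> S" "0 < w i0" "(s, i0) \<in> R0"
  shows "Lplus n R0 (override_on w v S)
           = (\<Sum>i\<in>fixed_tops n R0 S s w. Lplus n R0 (override_on (w(i := w i - 1)) v S))"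
proof -
  have "(i0, 0) \<in> lexsum_carrier n (override_on w v S)"
    using i0 by (simp add: lexsum_carrier_def)
  then have ne: "lexsum_carrier n (override_on w v S) \<noteq> {}"
    by blast
  show ?thesis
    unfolding Lplus_remove_top[OF ne] top_blocks_override_dominated[where w = w and v = v, OF po s i0]
    by (rule sum_Lplus_fixed_tops_decrement)
qed

lemma Lplus_override_top:
  assumes po: "partial_order_on {..<n} R0" and S: "S \<subseteq> {..<n}"
    and s: "s \<in> S" "\<forall>t\<in>S. (t, s) \<in> R0"
    and free: "\<forall>i<n. i \<notin> S \<and> (s, i) \<in> R0 \<longrightarrow> w i = 0" and vs: "0 < v s"
  shows "Lplus n R0 (override_on w v S)
           = Lplus n R0 (override_on w (v(s := v s - 1)) S)
             + (\<Sum>i\<in>fixed_tops n R0 S s w. Lplus n R0 (override_on (w(i := w i - 1)) v S))"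
proof -
  have "(s, 0) \<in> lexsum_carrier n (override_on w v S)"
    using s S vs by (auto simp: lexsum_carrier_def)
  then have ne: "lexsum_carrier n (override_on w v S) \<noteq> {}"
    by blast
  have "Lplus n R0 (override_on w v S)
      = (\<Sum>i\<in>insert s (fixed_tops n R0 S s w). Lplus n R0 ((override_on w v S)(i := override_on w v S i - 1)))"
    unfolding Lplus_remove_top[OF ne] top_blocks_override_top[where w = w and v = v, OF po S s free vs] ..
  also have "\<dots> = Lplus n R0 ((override_on w v S)(s := override_on w v S s - 1))
      + (\<Sum>i\<in>fixed_tops n R0 S s w. Lplus n R0 ((override_on w v S)(i := override_on w v S i - 1)))"
    using s(1) fixed_topsD(2)[of s n R0 S s w] by (intro sum.insert finite_fixed_tops) blast
  also have "\<dots> = Lplus n R0 (override_on w (v(s := v s - 1)) S)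
             + (\<Sum>i\<in>fixed_tops n R0 S s w. Lplus n R0 (override_on (w(i := w i - 1)) v S))"
    by (simp only: override_on_decrement_in[OF s(1)] sum_Lplus_fixed_tops_decrement)
  finally show ?thesis .
qed

lemma poly_fun_Lplus_chain_step:
  assumes po: "partial_order_on {..<n} R0" and S: "S \<subseteq> {..<n}"
    and s: "s \<in> S" "\<forall>t\<in>S. (t, s) \<in> R0"
    and smaller: "\<And>w. poly_fun (S - {s}) (\<lambda>v. of_nat (Lplus n R0 (override_on w v (S - {s}))))"
  shows "poly_fun S (\<lambda>v. of_nat (Lplus n R0 (override_on w v S)))"
proof (induction "sum w ({..<n} - S)" arbitrary: w rule: less_induct)
  case less
  define G where "G v = (of_nat (Lplus n R0 (override_on w v S)) :: rat)" for v
  define H where "H v = (\<Sum>i\<in>fixed_tops n R0 S s w. of_nat (Lplus n R0 (override_on (w(i := w i - 1)) v S)) :: rat)"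
    for v
  have "poly_fun S H"
    unfolding H_def using fixed_topsD
    by (intro poly_fun_sum finite_fixed_tops less.hyps sum_decrement_less) auto
  \<comment> \<open>Either a nonempty fixed block above \<open>s\<close> keeps all of \<open>S\<close> below the top, or \<open>s\<close> is a
      top block as soon as \<open>v s > 0\<close>.\<close>
  consider (dominated) i0 where "i0 < n" "i0 \<notin> S" "0 < w i0" "(s, i0) \<in> R0"
    | (top) "\<forall>i<n. i \<notin> S \<and> (s, i) \<in> R0 \<longrightarrow> w i = 0"
    by blast
  then have "poly_fun S G"
  proof cases
    case dominated
    then have "G = H"
      by (simp add: fun_eq_iff G_def H_def Lplus_override_dominated[where w = w, OF po s dominated])
    with \<open>poly_fun S H\<close> show ?thesis
      by simp
  next
    case top
    have "G v = G (v(s := v s - 1)) + H v" if "0 < v s" for v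
      by (simp add: G_def H_def Lplus_override_top[where w = w and v = v, OF po S s top that])
    moreover have "override_on w (v(s := 0)) S = override_on (w(s := 0)) v (S - {s})" for v
      using s(1) by (auto simp: override_on_def fun_eq_iff)
    then have "poly_fun S (\<lambda>v. G (v(s := 0)))"
      using poly_fun_mono[OF smaller[of "w(s := 0)"]] by (simp add: G_def)
    ultimately show ?thesis
      using poly_fun_telescope[OF s(1) \<open>poly_fun S H\<close>] by blast
  qed
  then show ?case
    by (simp add: G_def[abs_def])
qed

lemma poly_fun_Lplus_chain:
  assumes po: "partial_order_on {..<n} R0"
  shows "S \<subseteq> {..<n} \<Longrightarrow> is_chain_in R0 S \<Longrightarrow> poly_fun S (\<lambda>v. of_nat (Lplus n R0 (override_on w v S)))"
proof (induction "card S" arbitrary: S w rule: less_induct)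
  case less
  show ?case
  proof (cases "S = {}")
    case True
    then show ?thesis
      by (simp add: poly_fun_const)
  next
    case False
    then obtain s where s: "s \<in> S" "\<forall>t\<in>S. (t, s) \<in> R0"
      using chain_has_greatest[OF po less.prems(1) _ less.prems(2)] by metis
    have "card (S - {s}) < card S"
      using s(1) less.prems(1) finite_subset by (intro card_Diff1_less) auto
    moreover have "S - {s} \<subseteq> {..<n}" "is_chain_in R0 (S - {s})"
      using less.prems by (auto simp: is_chain_in_def)
    ultimately have "poly_fun (S - {s}) (\<lambda>v. of_nat (Lplus n R0 (override_on w' v (S - {s}))))" for w'
      by (rule less.hyps)
    then show ?thesis
      by (rule poly_fun_Lplus_chain_step[OF po less.prems(1) s])
  qed
qed

lemma is_rat_poly_in_Lplus_chain:
  assumes "partial_order_on {..<n} R0" "S \<subseteq> {..<n}" "is_chain_in R0 S"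
  shows "is_rat_poly_in S (\<lambda>v. Lplus n R0 (override_on w v S))"
  using assms(2) finite_subset poly_fun_Lplus_chain[OF assms]
  by (intro is_rat_poly_in_if_poly_fun) auto

lemma not_is_rat_poly_in_Lplus_incomparable:
  assumes po: "partial_order_on {..<n} R0" and S: "S \<subseteq> {..<n}"
    and xy: "x \<in> S" "y \<in> S" "(x, y) \<notin> R0" "(y, x) \<notin> R0"
  shows "\<not> is_rat_poly_in S (\<lambda>v. Lplus n R0 (override_on w v S))"
proof (rule not_is_rat_poly_in_if_exponential)
  show "finite S"
    using S finite_subset by blast
  fix k :: nat
  define v where "v i = (if i = x \<or> i = y then k else 0)" for i
  have "2 ^ min (override_on w v S x) (override_on w v S y) \<le> Lplus n R0 (override_on w v S)"
    using xy S by (intro Lplus_incomparable_lower_bound[OF po]) auto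
  then have "2 ^ k \<le> Lplus n R0 (override_on w v S)"
    using xy(1,2) by (simp add: v_def)
  moreover have "\<forall>i. v i \<le> k"
    by (simp add: v_def)
  ultimately show "\<exists>v. (\<forall>i. v i \<le> k) \<and> 2 ^ k \<le> Lplus n R0 (override_on w v S)"
    by blast
qed

theorem theorem5p2:
  fixes n :: nat and R0 :: "(nat \<times> nat) set" and S :: "nat set"
  assumes "partial_order_on {..<n} R0"
    and "S \<subseteq> {..<n}"
  shows "(is_chain_in R0 S \<longrightarrow>
            (\<forall>mfix :: nat \<Rightarrow> nat. is_rat_poly_in S (\<lambda>v. Lplus n R0 (\<lambda>i. if i \<in> S then v i else mfix i))))
       \<and> (\<not> is_chain_in R0 S \<longrightarrow>
            (\<forall>mfix :: nat \<Rightarrow> nat. \<not> is_rat_poly_in S (\<lambda>v. Lplus n R0 (\<lambda>i. if i \<in> S then v i else mfix i))))"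
proof -
  have "(\<lambda>i. if i \<in> S then v i else mfix i) = override_on mfix v S" for v mfix :: "nat \<Rightarrow> nat"
    by (simp add: override_on_def)
  moreover have "is_chain_in R0 S \<Longrightarrow> is_rat_poly_in S (\<lambda>v. Lplus n R0 (override_on mfix v S))" for mfix
    using assms by (rule is_rat_poly_in_Lplus_chain)
  moreover have "\<not> is_rat_poly_in S (\<lambda>v. Lplus n R0 (override_on mfix v S))"
    if not_chain: "\<not> is_chain_in R0 S" for mfix
  proof -
    obtain x y where "x \<in> S" "y \<in> S" "(x, y) \<notin> R0" "(y, x) \<notin> R0"
      using not_chain unfolding is_chain_in_def by blast
    with assms show ?thesis
      by (intro not_is_rat_poly_in_Lplus_incomparable)
  qed
  ultimately show ?thesis
    by simp
qed

end
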